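(* In the setting below, if $\{\mathbb G(t)\}$ is uniformly strongly connected, then for every fixed $\tau\ge0$, $S(t)\cdots S(\tau+1)S(\tau)\to\frac1n\mathbf 1\,y^\top(\tau)$ as $t\to\infty$, where $y(\tau)=(y_1(\tau),\dots,y_n(\tau))^\top$ and $\mathbf 1$ is the all-ones vector.
   Context: Setting. Fix $n$ agents, $\mathcal V=\{1,\dots,n\}$. For each $t\in\{0,1,2,\dots\}$, $\mathbb G(t)=(\mathcal V,\mathcal E(t))$ is a directed graph containing a self-arc $(i,i)$ at every vertex; $\mathcal N_i(t)=\{j:(j,i)\in\mathcal E(t)\}$ and $\mathcal N_i^-(t)=\{k:(i,k)\in\mathcal E(t)\}$. Weights $w_{ij}(t)$ are positive for $j\in\mathcal N_i(t)$ and $w_{ij}(t)=0$ otherwise, and satisfy: there is $\beta>0$ with $w_{ij}(t)\ge\beta$ whenever $j\in\mathcal N_i(t)$, and $\sum_{j\in\mathcal N_i^-(t)}w_{ji}(t)=1$ for all $i,t$. Thus $W(t)=[w_{ij}(t)]$ is column stochastic with positive diagonal. The sequence $\{\mathbb G(t)\}$ is uniformly strongly connected if there is a positive integer $L$ such that for every $t\ge0$ the directed graph with vertex set $\mathcal V$ and edge set $\bigcup_{k=t}^{t+L-1}\mathcal E(k)$ is strongly connected. The $y$-iteration of push-sum: $y_i(t+1)=\sum_{j}w_{ij}(t)y_j(t)$, $y_i(0)=1$. Define $S(t)$ with entries $s_{ij}(t)=w_{ij}(t)y_j(t)/y_i(t+1)$. *)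

theory Defs
  imports "HOL-Analysis.Analysis"
begin

text \<open>Agents are the elements of a finite type 'n (so n = CARD('n)).
  Weights: w t i j = w_ij(t). Graph edges: E t, a set of arcs (j,i).\<close>

fun push_sum_y :: "(nat \<Rightarrow> 'n::finite \<Rightarrow> 'n \<Rightarrow> real) \<Rightarrow> nat \<Rightarrow> 'n \<Rightarrow> real" where
  "push_sum_y w 0 i = 1"
| "push_sum_y w (Suc t) i = (\<Sum>j\<in>UNIV. w t i j * push_sum_y w t j)"

definition y_vec :: "(nat \<Rightarrow> 'n::finite \<Rightarrow> 'n \<Rightarrow> real) \<Rightarrow> nat \<Rightarrow> real ^ 'n" where
  "y_vec w t = (\<chi> i. push_sum_y w t i)"

definition S_mat :: "(nat \<Rightarrow> 'n::finite \<Rightarrow> 'n \<Rightarrow> real) \<Rightarrow> nat \<Rightarrow> real ^ 'n ^ 'n" where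
  "S_mat w t = (\<chi> i j. w t i j * push_sum_y w t j / push_sum_y w (Suc t) i)"

text \<open>Left product S(t) ... S(tau+1) S(tau) (identity if t < tau).\<close>
definition S_prod :: "(nat \<Rightarrow> 'n::finite \<Rightarrow> 'n \<Rightarrow> real) \<Rightarrow> nat \<Rightarrow> nat \<Rightarrow> real ^ 'n ^ 'n" where
  "S_prod w \<tau> t = fold (\<lambda>k M. S_mat w k ** M) [\<tau>..<Suc t] (mat 1)"

definition strongly_connected :: "('n \<times> 'n) set \<Rightarrow> bool" where
  "strongly_connected A \<longleftrightarrow> (\<forall>i j. (i, j) \<in> A\<^sup>*)"

definition uniformly_strongly_connected :: "(nat \<Rightarrow> ('n \<times> 'n) set) \<Rightarrow> bool" where
  "uniformly_strongly_connected E \<longleftrightarrow>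
     (\<exists>L::nat. L > 0 \<and> (\<forall>t. strongly_connected (\<Union>k\<in>{t..<t+L}. E k)))"

end

theory Submission
  imports Defs
begin

text \<open>
  S(t) is row stochastic, and y(t+1)/n is a left eigenvector of it in the sense that
  y(t+1)^T S(t) = y(t)^T. Since w(t) has diagonal and edge weights at least \<beta>, the
  entries y_i(t) stay above \<beta>^(n L), so the positive entries of S(t) are bounded below
  uniformly. Along any window of n L steps the union graph is strongly connected n times
  over, so every product of n L consecutive S's is entrywise at least some \<gamma> > 0 and
  shrinks the oscillation of each column by the factor 1 - \<gamma>. Hence all rows of
  S(t) \<cdots> S(\<tau>) approach a common row, which the eigenvector relation identifies as y(\<tau>)^T / n.
\<close>

fun backward_prod ::
  "(nat \<Rightarrow> 'n::finite \<Rightarrow> 'n \<Rightarrow> 'a::comm_semiring_1) \<Rightarrow> nat \<Rightarrow> nat \<Rightarrow> 'n \<Rightarrow> 'n \<Rightarrow> 'a" where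
  "backward_prod A s 0 i j = (if i = j then 1 else 0)"
| "backward_prod A s (Suc k) i j = (\<Sum>l\<in>UNIV. A (s + k) i l * backward_prod A s k l j)"

lemma sum_delta_left:
  fixes f :: "'n::finite \<Rightarrow> 'a::comm_semiring_1"
  shows "(\<Sum>l\<in>UNIV. (if i = l then 1 else 0) * f l) = f i"
  by (simp add: if_distrib[where f="\<lambda>x. x * _"] cong: if_cong)

lemma backward_prod_add:
  "backward_prod A s (k + K) i j = (\<Sum>l\<in>UNIV. backward_prod A (s + k) K i l * backward_prod A s k l j)"
proof (induction K arbitrary: i)
  case 0
  show ?case by (simp add: sum_delta_left)
next
  case (Suc K)
  have "backward_prod A s (k + Suc K) i j
      = (\<Sum>l\<in>UNIV. A (s + k + K) i l * (\<Sum>m\<in>UNIV. backward_prod A (s + k) K l m * backward_prod A s k m j))"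
    using Suc by (simp add: add.assoc)
  also have "\<dots> = (\<Sum>m\<in>UNIV. (\<Sum>l\<in>UNIV. A (s + k + K) i l * backward_prod A (s + k) K l m) * backward_prod A s k m j)"
    unfolding sum_distrib_left sum_distrib_right by (subst sum.swap) (simp add: mult.assoc)
  finally show ?case by simp
qed

lemma backward_prod_mult_recurrence:
  assumes "\<And>t i. x (Suc t) i = (\<Sum>j\<in>UNIV. A t i j * x t j)"
  shows "x (s + k) i = (\<Sum>j\<in>UNIV. backward_prod A s k i j * x s j)"
proof (induction k arbitrary: i)
  case 0
  show ?case by (simp add: sum_delta_left)
next
  case (Suc k)
  have "x (s + Suc k) i = (\<Sum>l\<in>UNIV. A (s + k) i l * (\<Sum>j\<in>UNIV. backward_prod A s k l j * x s j))"
    using assms Suc by simp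
  also have "\<dots> = (\<Sum>j\<in>UNIV. (\<Sum>l\<in>UNIV. A (s + k) i l * backward_prod A s k l j) * x s j)"
    unfolding sum_distrib_left sum_distrib_right by (subst sum.swap) (simp add: mult.assoc)
  finally show ?case by simp
qed

lemma backward_prod_left_invariant:
  assumes "\<And>t l. (\<Sum>i\<in>UNIV. \<pi> (Suc t) i * A t i l) = \<pi> t l"
  shows "(\<Sum>i\<in>UNIV. \<pi> (s + k) i * backward_prod A s k i j) = \<pi> s j"
proof (induction k)
  case 0
  show ?case by (simp add: if_distrib[where f="\<lambda>x. _ * x"] cong: if_cong)
next
  case (Suc k)
  have "(\<Sum>i\<in>UNIV. \<pi> (s + Suc k) i * backward_prod A s (Suc k) i j)
      = (\<Sum>l\<in>UNIV. (\<Sum>i\<in>UNIV. \<pi> (Suc (s + k)) i * A (s + k) i l) * backward_prod A s k l j)"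
    unfolding backward_prod.simps sum_distrib_left sum_distrib_right
    by (simp add: mult.assoc) (subst sum.swap, rule refl)
  then show ?case using assms Suc by simp
qed

lemma backward_prod_nonneg:
  fixes A :: "nat \<Rightarrow> 'n::finite \<Rightarrow> 'n \<Rightarrow> 'a::linordered_semidom"
  assumes "\<And>t i j. 0 \<le> A t i j"
  shows "0 \<le> backward_prod A s k i j"
  by (induction k arbitrary: i) (auto intro!: sum_nonneg mult_nonneg_nonneg assms)

lemma backward_prod_row_sum:
  assumes "\<And>t i. (\<Sum>j\<in>UNIV. A t i j) = 1"
  shows "(\<Sum>j\<in>UNIV. backward_prod A s k i j) = 1"
proof (induction k arbitrary: i)
  case 0
  show ?case by simp
next
  case (Suc k)
  have "(\<Sum>j\<in>UNIV. backward_prod A s (Suc k) i j) = (\<Sum>l\<in>UNIV. A (s + k) i l * (\<Sum>j\<in>UNIV. backward_prod A s k l j))"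
    unfolding backward_prod.simps sum_distrib_left by (subst sum.swap) (simp add: mult.assoc)
  then show ?case using Suc assms by simp
qed

lemma backward_prod_le_one:
  fixes A :: "nat \<Rightarrow> 'n::finite \<Rightarrow> 'n \<Rightarrow> 'a::linordered_semidom"
  assumes "\<And>t i j. 0 \<le> A t i j" and "\<And>t i. (\<Sum>j\<in>UNIV. A t i j) = 1"
  shows "backward_prod A s k i j \<le> 1"
proof -
  have "backward_prod A s k i j \<le> (\<Sum>j\<in>UNIV. backward_prod A s k i j)"
    by (rule member_le_sum) (auto intro: backward_prod_nonneg assms)
  with backward_prod_row_sum[OF assms(2)] show ?thesis by simp
qed

lemma rtrancl_exit_edge:
  assumes "(x, y) \<in> U\<^sup>*" and "x \<in> P" and "y \<notin> P"
  obtains a b where "(a, b) \<in> U" and "a \<in> P" and "b \<notin> P"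
  using assms by (induction rule: rtrancl_induct) auto

text \<open>
  The set R k of rows i with entry (i,j) of the k-step product at least \<alpha>^k grows along
  edges and never shrinks (self-arcs); strong connectivity of each window of length L
  forces it to gain a new row within every L steps until it is everything.
\<close>
lemma backward_prod_ge_power_if_connected:
  fixes A :: "nat \<Rightarrow> 'n::finite \<Rightarrow> 'n \<Rightarrow> 'a::linordered_semidom"
  assumes nonneg: "\<And>t i j. 0 \<le> A t i j"
    and edge: "\<And>t i j. (j, i) \<in> E t \<Longrightarrow> \<alpha> \<le> A t i j"
    and self_arcs: "\<And>t i. (i, i) \<in> E t"
    and alpha_pos: "0 < \<alpha>"
    and connected: "\<And>t. strongly_connected (\<Union>k\<in>{t..<t + L}. E k)"
  shows "\<alpha> ^ (CARD('n) * L) \<le> backward_prod A s (CARD('n) * L) i j"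
proof -
  define R where "R k = {i. \<alpha> ^ k \<le> backward_prod A s k i j}" for k
  have R_step: "b \<in> R (Suc k)" if "a \<in> R k" and "(a, b) \<in> E (s + k)" for a b k
  proof -
    have "\<alpha> * \<alpha> ^ k \<le> A (s + k) b a * backward_prod A s k a j"
      using that edge[of a b "s + k"] alpha_pos unfolding R_def
      by (intro mult_mono) (auto intro: nonneg)
    also have "\<dots> \<le> (\<Sum>l\<in>UNIV. A (s + k) b l * backward_prod A s k l j)"
      by (rule member_le_sum) (auto intro!: mult_nonneg_nonneg nonneg backward_prod_nonneg)
    finally show ?thesis unfolding R_def by simp
  qed
  have R_mono: "R k \<subseteq> R (k + d)" for k d
  proof (induction d)
    case (Suc d)
    then show ?case using R_step[OF _ self_arcs] by auto
  qed simp
  have j_in_R: "j \<in> R k" for k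
    using R_mono[of 0 k] unfolding R_def by auto
  have R_grows: "\<exists>b. b \<notin> R k \<and> b \<in> R (k + L)" if proper: "R k \<noteq> UNIV" for k
  proof -
    obtain b0 where b0: "b0 \<notin> R k" using proper by blast
    have "(j, b0) \<in> (\<Union>t\<in>{s + k..<s + k + L}. E t)\<^sup>*"
      using connected[of "s + k"] unfolding strongly_connected_def by blast
    then obtain a b where "(a, b) \<in> (\<Union>t\<in>{s + k..<s + k + L}. E t)" "a \<in> R k" "b \<notin> R k"
      using j_in_R b0 by (rule rtrancl_exit_edge)
    then obtain t where ab: "(a, b) \<in> E t" "a \<in> R k" "b \<notin> R k" "t \<in> {s + k..<s + k + L}"
      by blast
    define d where "d = t - (s + k)"
    have t: "t = s + (k + d)" "d < L" using ab unfolding d_def by auto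
    have "a \<in> R (k + d)" using R_mono ab by blast
    then have "b \<in> R (Suc (k + d))" using R_step ab t by simp
    then have "b \<in> R (k + L)" using R_mono[of "Suc (k + d)" "L - Suc d"] t by auto
    then show ?thesis using ab by blast
  qed
  have R_card: "min (Suc m) CARD('n) \<le> card (R (m * L))" for m
  proof (induction m)
    case 0
    have "card {j} \<le> card (R 0)" using j_in_R by (intro card_mono) auto
    then show ?case by simp
  next
    case (Suc m)
    show ?case
    proof (cases "R (m * L) = UNIV")
      case True
      then have "R (Suc m * L) = UNIV" using R_mono[of "m * L" L] by (auto simp: add.commute)
      then show ?thesis by simp
    next
      case False
      then have "R (m * L) \<subset> R (m * L + L)" using R_mono R_grows by blast
      then have "card (R (m * L)) < card (R (m * L + L))" by (intro psubset_card_mono) auto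
      then show ?thesis using Suc by (simp add: add.commute)
    qed
  qed
  have "R (CARD('n) * L) = UNIV"
    using R_card[of "CARD('n)"] by (intro card_seteq) auto
  then show ?thesis unfolding R_def by auto
qed

definition oscillation_le :: "('n \<Rightarrow> real) \<Rightarrow> real \<Rightarrow> bool" where
  "oscillation_le x d \<longleftrightarrow> (\<exists>m. \<forall>a. m \<le> x a \<and> x a \<le> m + d)"

lemma convex_combination_bounds:
  fixes p x :: "'n::finite \<Rightarrow> real"
  assumes "\<And>i. 0 \<le> p i" and "(\<Sum>i\<in>UNIV. p i) = 1" and "\<And>i. m \<le> x i" and "\<And>i. x i \<le> M"
  shows "m \<le> (\<Sum>i\<in>UNIV. p i * x i)" and "(\<Sum>i\<in>UNIV. p i * x i) \<le> M"
proof -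
  have "(\<Sum>i\<in>UNIV. p i * m) \<le> (\<Sum>i\<in>UNIV. p i * x i)"
    using assms by (intro sum_mono mult_left_mono) auto
  then show "m \<le> (\<Sum>i\<in>UNIV. p i * x i)" using assms(2) by (simp add: sum_distrib_right[symmetric])
  have "(\<Sum>i\<in>UNIV. p i * x i) \<le> (\<Sum>i\<in>UNIV. p i * M)"
    using assms by (intro sum_mono mult_left_mono) auto
  then show "(\<Sum>i\<in>UNIV. p i * x i) \<le> M" using assms(2) by (simp add: sum_distrib_right[symmetric])
qed

lemma dist_convex_combination_le:
  fixes p x :: "'n::finite \<Rightarrow> real"
  assumes "\<And>i. 0 \<le> p i" and "(\<Sum>i\<in>UNIV. p i) = 1" and "oscillation_le x d"
  shows "\<bar>x a - (\<Sum>i\<in>UNIV. p i * x i)\<bar> \<le> d"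
proof -
  obtain m where bounds: "\<And>i. m \<le> x i" "\<And>i. x i \<le> m + d"
    using assms(3) unfolding oscillation_le_def by blast
  have "m \<le> (\<Sum>i\<in>UNIV. p i * x i)" "(\<Sum>i\<in>UNIV. p i * x i) \<le> m + d"
    using convex_combination_bounds[where m=m and M="m + d" and x=x, OF assms(1,2) bounds] by auto
  with bounds[of a] show ?thesis
    unfolding abs_le_iff by linarith
qed

text \<open>
  Comparing the combination with the one where every weight but Q i j0 is moved onto
  the minimum (resp. maximum) m (resp. m + d) places it, for every i, in the same interval
  starting at \<gamma> x j0 + (1 - \<gamma>) m, for any fixed j0.
\<close>
lemma stochastic_contracts_oscillation:
  fixes Q :: "'n::finite \<Rightarrow> 'n \<Rightarrow> real"
  assumes lower: "\<And>i l. \<gamma> \<le> Q i l" and nonneg: "\<And>i l. 0 \<le> Q i l"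
    and row_sum: "\<And>i. (\<Sum>l\<in>UNIV. Q i l) = 1"
    and "oscillation_le x d"
  shows "oscillation_le (\<lambda>i. \<Sum>l\<in>UNIV. Q i l * x l) ((1 - \<gamma>) * d)"
proof -
  obtain m where x_bounds: "\<And>a. m \<le> x a \<and> x a \<le> m + d"
    using assms(4) unfolding oscillation_le_def by blast
  fix j0 :: 'n
  have "\<gamma> * x j0 + (1 - \<gamma>) * m \<le> (\<Sum>l\<in>UNIV. Q i l * x l) \<and>
        (\<Sum>l\<in>UNIV. Q i l * x l) \<le> \<gamma> * x j0 + (1 - \<gamma>) * m + (1 - \<gamma>) * d" for i
  proof
    have "(\<Sum>l\<in>UNIV. Q i l * x l) = m + (\<Sum>l\<in>UNIV. Q i l * (x l - m))"
      using row_sum[of i] by (simp add: right_diff_distrib sum_subtractf sum_distrib_right[symmetric])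
    moreover have "\<gamma> * (x j0 - m) \<le> Q i j0 * (x j0 - m)"
      by (rule mult_right_mono) (auto simp: lower x_bounds)
    moreover have "Q i j0 * (x j0 - m) \<le> (\<Sum>l\<in>UNIV. Q i l * (x l - m))"
      by (rule member_le_sum) (auto intro!: mult_nonneg_nonneg nonneg simp: x_bounds)
    ultimately show "\<gamma> * x j0 + (1 - \<gamma>) * m \<le> (\<Sum>l\<in>UNIV. Q i l * x l)"
      by (simp add: algebra_simps)
    have "(\<Sum>l\<in>UNIV. Q i l * x l) = (m + d) - (\<Sum>l\<in>UNIV. Q i l * ((m + d) - x l))"
      using row_sum[of i] by (simp add: right_diff_distrib sum_subtractf sum_distrib_right[symmetric])
    moreover have "\<gamma> * ((m + d) - x j0) \<le> Q i j0 * ((m + d) - x j0)"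
      by (rule mult_right_mono) (auto simp: lower x_bounds)
    moreover have "Q i j0 * ((m + d) - x j0) \<le> (\<Sum>l\<in>UNIV. Q i l * ((m + d) - x l))"
      by (rule member_le_sum) (auto intro!: mult_nonneg_nonneg nonneg simp: x_bounds)
    ultimately show "(\<Sum>l\<in>UNIV. Q i l * x l) \<le> \<gamma> * x j0 + (1 - \<gamma>) * m + (1 - \<gamma>) * d"
      by (simp add: algebra_simps)
  qed
  then show ?thesis unfolding oscillation_le_def by blast
qed

lemma oscillation_backward_prod_column:
  fixes A :: "nat \<Rightarrow> 'n::finite \<Rightarrow> 'n \<Rightarrow> real"
  assumes nonneg: "\<And>t i j. 0 \<le> A t i j" and row_sum: "\<And>t i. (\<Sum>j\<in>UNIV. A t i j) = 1"
    and block_lower: "\<And>s i j. \<gamma> \<le> backward_prod A s K i j"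
  shows "oscillation_le (\<lambda>a. backward_prod A s (k + q * K) a j) ((1 - \<gamma>) ^ q)"
proof (induction q)
  case 0
  have "oscillation_le (\<lambda>a. backward_prod A s k a j) 1"
    unfolding oscillation_le_def
    by (rule exI[of _ 0]) (simp add: backward_prod_nonneg backward_prod_le_one nonneg row_sum)
  then show ?case by simp
next
  case (Suc q)
  have "oscillation_le (\<lambda>a. \<Sum>l\<in>UNIV. backward_prod A (s + (k + q * K)) K a l * backward_prod A s (k + q * K) l j)
          ((1 - \<gamma>) * (1 - \<gamma>) ^ q)"
    by (rule stochastic_contracts_oscillation[OF block_lower backward_prod_nonneg backward_prod_row_sum Suc])
      (auto simp: nonneg row_sum)
  moreover have "k + Suc q * K = (k + q * K) + K" by simp
  ultimately show ?case
    by (simp only: backward_prod_add[of A s "k + q * K" K] power_Suc)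
qed

text \<open>
  An absolute probability sequence \<pi> (left eigenvectors of the A(t) that are probability
  vectors) pins down the common limit row.
\<close>
lemma backward_prod_dist_le:
  fixes A :: "nat \<Rightarrow> 'n::finite \<Rightarrow> 'n \<Rightarrow> real"
  assumes nonneg: "\<And>t i j. 0 \<le> A t i j" and row_sum: "\<And>t i. (\<Sum>j\<in>UNIV. A t i j) = 1"
    and block_lower: "\<And>s i j. \<gamma> \<le> backward_prod A s K i j"
    and \<pi>_nonneg: "\<And>t i. 0 \<le> \<pi> t i" and \<pi>_sum: "\<And>t. (\<Sum>i\<in>UNIV. \<pi> t i) = 1"
    and \<pi>_invariant: "\<And>t l. (\<Sum>i\<in>UNIV. \<pi> (Suc t) i * A t i l) = \<pi> t l"
  shows "\<bar>backward_prod A s k i j - \<pi> s j\<bar> \<le> (1 - \<gamma>) ^ (k div K)"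
proof -
  have "oscillation_le (\<lambda>a. backward_prod A s k a j) ((1 - \<gamma>) ^ (k div K))"
    using oscillation_backward_prod_column[OF nonneg row_sum block_lower, of s "k mod K" "k div K" j]
    by simp
  then have "\<bar>backward_prod A s k i j - (\<Sum>l\<in>UNIV. \<pi> (s + k) l * backward_prod A s k l j)\<bar>
      \<le> (1 - \<gamma>) ^ (k div K)"
    by (rule dist_convex_combination_le[OF \<pi>_nonneg \<pi>_sum])
  then show ?thesis
    by (simp only: backward_prod_left_invariant[of \<pi> A, OF \<pi>_invariant])
qed

lemma filterlim_div_at_top:
  assumes "0 < K"
  shows "filterlim (\<lambda>k::nat. k div K) at_top sequentially"
  unfolding filterlim_at_top eventually_sequentially
proof
  fix Z :: nat
  have "Z \<le> k div K" if "Z * K \<le> k" for k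
    using div_le_mono[OF that, of K] assms by simp
  then show "\<exists>N. \<forall>k\<ge>N. Z \<le> k div K" by blast
qed

lemma backward_prod_tendsto:
  fixes A :: "nat \<Rightarrow> 'n::finite \<Rightarrow> 'n \<Rightarrow> real"
  assumes nonneg: "\<And>t i j. 0 \<le> A t i j" and row_sum: "\<And>t i. (\<Sum>j\<in>UNIV. A t i j) = 1"
    and block_lower: "\<And>s i j. \<gamma> \<le> backward_prod A s K i j" and "0 < \<gamma>" and "0 < K"
    and \<pi>_nonneg: "\<And>t i. 0 \<le> \<pi> t i" and \<pi>_sum: "\<And>t. (\<Sum>i\<in>UNIV. \<pi> t i) = 1"
    and \<pi>_invariant: "\<And>t l. (\<Sum>i\<in>UNIV. \<pi> (Suc t) i * A t i l) = \<pi> t l"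
  shows "(\<lambda>k. backward_prod A s k i j) \<longlonglongrightarrow> \<pi> s j"
proof (rule LIM_zero_cancel, rule Lim_null_comparison)
  have "\<gamma> \<le> backward_prod A 0 K i j" by (rule block_lower)
  also have "\<dots> \<le> 1" by (rule backward_prod_le_one[OF nonneg row_sum])
  finally show "(\<lambda>k. (1 - \<gamma>) ^ (k div K)) \<longlonglongrightarrow> 0"
    using filterlim_compose[OF LIMSEQ_power_zero[of "1 - \<gamma>"] filterlim_div_at_top[OF \<open>0 < K\<close>]] \<open>0 < \<gamma>\<close>
    by simp
  show "\<forall>\<^sub>F k in sequentially. norm (backward_prod A s k i j - \<pi> s j) \<le> (1 - \<gamma>) ^ (k div K)"
    using backward_prod_dist_le[OF nonneg row_sum block_lower \<pi>_nonneg \<pi>_sum \<pi>_invariant]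
    by (simp add: always_eventually)
qed

lemma fold_S_mat_eq_backward_prod:
  "fold (\<lambda>k M. S_mat w k ** M) [s..<s + k] (mat 1) $ i $ j
     = backward_prod (\<lambda>t i j. S_mat w t $ i $ j) s k i j"
proof (induction k arbitrary: i)
  case 0
  then show ?case by (simp add: mat_def)
next
  case (Suc k)
  have "[s..<s + Suc k] = [s..<s + k] @ [s + k]" by simp
  with Suc show ?case by (simp add: matrix_matrix_mult_def)
qed

lemma S_prod_eq_backward_prod:
  assumes "\<tau> \<le> t"
  shows "S_prod w \<tau> t $ i $ j = backward_prod (\<lambda>t i j. S_mat w t $ i $ j) \<tau> (Suc t - \<tau>) i j"
  using fold_S_mat_eq_backward_prod[of w \<tau> "Suc t - \<tau>"] assms
  unfolding S_prod_def by (simp add: Suc_diff_le)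
locale push_sum =
  fixes E :: "nat \<Rightarrow> ('n::finite \<times> 'n) set"
    and w :: "nat \<Rightarrow> 'n \<Rightarrow> 'n \<Rightarrow> real"
    and \<beta> :: real
    and L :: nat
  assumes self_arcs: "\<And>t i. (i, i) \<in> E t"
    and w_zero: "\<And>t i j. (j, i) \<notin> E t \<Longrightarrow> w t i j = 0"
    and beta_pos: "\<beta> > 0"
    and w_beta: "\<And>t i j. (j, i) \<in> E t \<Longrightarrow> w t i j \<ge> \<beta>"
    and col_stoch: "\<And>t i. (\<Sum>j\<in>{k. (i, k) \<in> E t}. w t j i) = 1"
    and window_pos: "L > 0"
    and connected: "\<And>t. strongly_connected (\<Union>k\<in>{t..<t + L}. E k)"
begin

abbreviation y :: "nat \<Rightarrow> 'n \<Rightarrow> real" where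
  "y \<equiv> push_sum_y w"

abbreviation S :: "nat \<Rightarrow> 'n \<Rightarrow> 'n \<Rightarrow> real" where
  "S t i j \<equiv> S_mat w t $ i $ j"

lemma w_nonneg: "0 \<le> w t i j"
  using w_beta[of j i t] w_zero[of j i t] beta_pos by (cases "(j, i) \<in> E t") auto

lemma w_column_sum: "(\<Sum>j\<in>UNIV. w t j i) = 1"
proof -
  have "(\<Sum>j\<in>UNIV. w t j i) = (\<Sum>j\<in>{k. (i, k) \<in> E t}. w t j i)"
    by (rule sum.mono_neutral_right) (auto simp: w_zero)
  then show ?thesis using col_stoch by simp
qed

lemma beta_le_one: "\<beta> \<le> 1"
proof -
  fix i :: 'n
  have "\<beta> \<le> w 0 i i" using w_beta self_arcs by blast
  also have "\<dots> \<le> (\<Sum>j\<in>UNIV. w 0 j i)"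
    by (rule member_le_sum) (auto simp: w_nonneg)
  finally show ?thesis using w_column_sum by simp
qed

lemma y_nonneg: "0 \<le> y t i"
  by (induction t arbitrary: i) (auto intro!: sum_nonneg mult_nonneg_nonneg w_nonneg)

lemma y_sum: "(\<Sum>i\<in>UNIV. y t i) = real CARD('n)"
proof (induction t)
  case (Suc t)
  have "(\<Sum>i\<in>UNIV. y (Suc t) i) = (\<Sum>j\<in>UNIV. (\<Sum>i\<in>UNIV. w t i j) * y t j)"
    by (simp add: sum_distrib_right) (rule sum.swap)
  then show ?case using w_column_sum Suc by simp
qed simp

lemma y_le_card: "y t i \<le> real CARD('n)"
  using member_le_sum[of i UNIV "y t"] y_nonneg y_sum by simp

lemma y_ge_beta_power: "\<beta> ^ t \<le> y t i"
proof (induction t arbitrary: i)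
  case (Suc t)
  have "\<beta> * \<beta> ^ t \<le> w t i i * y t i"
    using Suc w_beta[OF self_arcs] beta_pos by (intro mult_mono) (auto simp: w_nonneg)
  also have "\<dots> \<le> (\<Sum>j\<in>UNIV. w t i j * y t j)"
    by (rule member_le_sum) (auto intro!: mult_nonneg_nonneg w_nonneg y_nonneg)
  finally show ?case by simp
qed simp

text \<open>
  Early on the self-loops alone keep y above \<beta>^t; later, the w-product over the last
  n L steps is entrywise at least \<beta>^(n L) and y sums to n.
\<close>
lemma y_lower_bound: "\<beta> ^ (CARD('n) * L) \<le> y t i"
proof (cases "CARD('n) * L \<le> t")
  case True
  define K where "K = CARD('n) * L"
  define s where "s = t - K"
  have "(\<Sum>j\<in>UNIV. \<beta> ^ K * y s j) \<le> (\<Sum>j\<in>UNIV. backward_prod w s K i j * y s j)"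
    unfolding K_def
    by (intro sum_mono mult_right_mono backward_prod_ge_power_if_connected[where E=E])
      (auto simp: w_nonneg y_nonneg w_beta self_arcs beta_pos connected)
  also have "\<dots> = y t i"
    using backward_prod_mult_recurrence[of y w s K i] True unfolding s_def K_def by simp
  finally have "\<beta> ^ K * real CARD('n) \<le> y t i"
    by (simp add: sum_distrib_left[symmetric] y_sum)
  moreover have "\<beta> ^ K \<le> \<beta> ^ K * real CARD('n)"
    using beta_pos by simp
  ultimately show ?thesis unfolding K_def by linarith
next
  case False
  then have "\<beta> ^ (CARD('n) * L) \<le> \<beta> ^ t"
    using beta_pos beta_le_one by (intro power_decreasing) auto
  then show ?thesis using y_ge_beta_power[of t i] by linarith
qed

lemma y_pos: "0 < y t i"
  using y_lower_bound[of t i] beta_pos by (smt (verit) zero_less_power)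

lemma S_eq: "S t i j = w t i j * y t j / y (Suc t) i"
  by (simp add: S_mat_def)

lemma S_nonneg: "0 \<le> S t i j"
  by (simp add: S_eq w_nonneg y_nonneg del: push_sum_y.simps)

lemma S_row_sum: "(\<Sum>j\<in>UNIV. S t i j) = 1"
  using y_pos[of "Suc t" i] by (simp add: S_eq sum_divide_distrib[symmetric])

lemma S_ge_on_edges:
  assumes "(j, i) \<in> E t"
  shows "\<beta> * \<beta> ^ (CARD('n) * L) / real CARD('n) \<le> S t i j"
proof -
  have "\<beta> * \<beta> ^ (CARD('n) * L) \<le> w t i j * y t j"
    using w_beta[OF assms] y_lower_bound beta_pos by (intro mult_mono) auto
  then have "\<beta> * \<beta> ^ (CARD('n) * L) / real CARD('n) \<le> w t i j * y t j / real CARD('n)"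
    by (simp add: divide_right_mono)
  also have "\<dots> \<le> w t i j * y t j / y (Suc t) i"
    using y_le_card y_pos
    by (intro divide_left_mono) (auto intro!: mult_nonneg_nonneg w_nonneg y_nonneg simp del: push_sum_y.simps)
  finally show ?thesis by (simp add: S_eq del: push_sum_y.simps)
qed

lemma y_left_invariant: "(\<Sum>i\<in>UNIV. y (Suc t) i * S t i l) = y t l"
proof -
  have "(\<Sum>i\<in>UNIV. y (Suc t) i * S t i l) = (\<Sum>i\<in>UNIV. w t i l) * y t l"
    unfolding sum_distrib_right using y_pos
    by (intro sum.cong) (auto simp: S_eq field_simps less_imp_neq[symmetric] simp del: push_sum_y.simps)
  then show ?thesis
    by (simp add: w_column_sum del: push_sum_y.simps)
qed

lemma S_backward_prod_tendsto:
  "(\<lambda>k. backward_prod S \<tau> k i j) \<longlonglongrightarrow> y \<tau> j / real CARD('n)"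
proof (rule backward_prod_tendsto[where \<pi>="\<lambda>t i. y t i / real CARD('n)"])
  let ?\<alpha> = "\<beta> * \<beta> ^ (CARD('n) * L) / real CARD('n)"
  show "?\<alpha> ^ (CARD('n) * L) \<le> backward_prod S s (CARD('n) * L) i j" for s i j
    by (rule backward_prod_ge_power_if_connected[where E=E])
      (auto simp: S_nonneg S_ge_on_edges self_arcs beta_pos connected)
qed (auto simp: S_nonneg S_row_sum beta_pos window_pos y_nonneg y_sum y_left_invariant
    sum_divide_distrib[symmetric] simp del: push_sum_y.simps)

end

theorem lemma4:
  fixes E :: "nat \<Rightarrow> ('n::finite \<times> 'n) set"
    and w :: "nat \<Rightarrow> 'n \<Rightarrow> 'n \<Rightarrow> real"
    and \<beta> :: real
    and \<tau> :: nat
  assumes self_arcs: "\<And>t i. (i, i) \<in> E t"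
    and w_pos: "\<And>t i j. (j, i) \<in> E t \<Longrightarrow> w t i j > 0"
    and w_zero: "\<And>t i j. (j, i) \<notin> E t \<Longrightarrow> w t i j = 0"
    and beta_pos: "\<beta> > 0"
    and w_beta: "\<And>t i j. (j, i) \<in> E t \<Longrightarrow> w t i j \<ge> \<beta>"
    and col_stoch: "\<And>t i. (\<Sum>j\<in>{k. (i, k) \<in> E t}. w t j i) = 1"
    and usc: "uniformly_strongly_connected E"
  shows "(\<lambda>t. S_prod w \<tau> t) \<longlonglongrightarrow>
           (1 / real CARD('n)) *\<^sub>R (\<chi> i j. y_vec w \<tau> $ j)"
proof (rule vec_tendstoI, rule vec_tendstoI)
  fix i j
  obtain L where "L > 0" and "\<And>t. strongly_connected (\<Union>k\<in>{t..<t + L}. E k)"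
    using usc unfolding uniformly_strongly_connected_def by blast
  then interpret push_sum E w \<beta> L
    by unfold_locales (use assms in auto)
  have "(\<lambda>t. backward_prod S \<tau> (Suc t - \<tau>) i j) \<longlonglongrightarrow> y \<tau> j / real CARD('n)"
    using filterlim_compose[OF S_backward_prod_tendsto
        filterlim_compose[OF filterlim_minus_const_nat_at_top filterlim_Suc]]
    by (simp add: o_def)
  moreover have "\<forall>\<^sub>F t in sequentially. backward_prod S \<tau> (Suc t - \<tau>) i j = S_prod w \<tau> t $ i $ j"
    by (rule eventually_mono[OF eventually_ge_at_top[of \<tau>]]) (simp add: S_prod_eq_backward_prod)
  ultimately show "(\<lambda>t. S_prod w \<tau> t $ i $ j)
      \<longlonglongrightarrow> ((1 / real CARD('n)) *\<^sub>R (\<chi> i j. y_vec w \<tau> $ j)) $ i $ j"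
    by (simp add: y_vec_def Lim_transform_eventually)
qed

end
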